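(* Let $\mathcal{C}$ be a binary linear code of length $n$ with BPSK images $\underline s=(1-2c_0,\dots,1-2c_{n-1})$ of codewords $\underline c$. Let $\underline c^{(0)}$ be the all-zero codeword and $\underline c^{(1)},\underline c^{(2)},\underline c$ codewords such that the four are pairwise distinct; put $d_1=W_H(\underline c^{(1)})$, $d_2=W_H(\underline c^{(2)})$, $d_{1,2}=W_H(\underline c^{(1)}-\underline c^{(2)})$, $i=W_H(\underline c)$, $j=W_H(\underline c-\underline c^{(1)})$, $h=W_H(\underline c-\underline c^{(2)})$. Choose an orthonormal coordinate system $(\xi_1,\xi_2,\xi_3)$ of a three-dimensional subspace of $\mathbb{R}^n$ containing $\underline s^{(1)}-\underline s^{(0)},\underline s^{(2)}-\underline s^{(0)},\underline s-\underline s^{(0)}$ such that $\underline s^{(1)}-\underline s^{(0)}$ points along the positive $\xi_1$-axis, $\underline s^{(2)}-\underline s^{(0)}$ lies in the $\xi_1\xi_2$-plane with positive $\xi_2$-component, and $\underline s-\underline s^{(0)}$ has nonnegative $\xi_3$-component. Let $\theta\in(0,\pi)$ be the azimuth angle of $\underline s^{(2)}-\underline s^{(0)}$ (so its unit direction is $(\cos\theta,\sin\theta,0)$, with $\cos\theta=(d_1+d_2-d_{1,2})/(2\sqrt{d_1d_2})$), and let $\alpha$ and $\phi\in[0,\pi/2]$ be the azimuth and colatitude angles of $\underline s-\underline s^{(0)}$ (so its unit direction is $(\sin\phi\cos\alpha,\sin\phi\sin\alpha,\cos\phi)$). Suppose $\underline s^{(0)}$ is transmitted over the AWGN channel, $\underline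 y=\underline s^{(0)}+\underline z$ with i.i.d. $\mathcal{N}(0,\sigma^2)$ noise, $\sigma>0$. Then $$p_4(i,j,h):={\rm Pr}\big\{(\underline s^{(0)}\to\underline s^{(1)})\cup(\underline s^{(0)}\to\underline s^{(2)})\cup(\underline s^{(0)}\to\underline s)\big\}=1-\iiint_{\Omega}f(\xi_1)f(\xi_2)f(\xi_3)\,d\xi_1\,d\xi_2\,d\xi_3,$$ where $f(x)=\frac{1}{\sqrt{2\pi}\sigma}e^{-x^2/(2\sigma^2)}$ and $$\Omega=\{(\xi_1,\xi_2,\xi_3):\ \xi_1<\sqrt{d_1},\ \xi_1\cos\theta+\xi_2\sin\theta<\sqrt{d_2},\ \xi_1\sin\phi\cos\alpha+\xi_2\sin\phi\sin\alpha+\xi_3\cos\phi<\sqrt{i}\}.$$ This holds also when the four bipolar codewords form a rectangle.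
   Context: $W_H$ denotes Hamming weight. For bipolar codewords $\underline s^{(0)},\underline s$, the event $\{\underline s^{(0)}\to\underline s\}$ is $\{\underline y:\|\underline y-\underline s\|\le\|\underline y-\underline s^{(0)}\|\}$ (Euclidean norm). Euclidean and Hamming distances are related by $\|\underline s-\underline s'\|=2\sqrt{W_H(\underline c-\underline c')}$. *)

theory Defs
  imports "HOL-Probability.Probability"
begin

text \<open>Binary words of length n are modelled as bool^'n with n = CARD('n);
  True stands for the bit 1.\<close>

definition hamming_weight :: "bool^'n \<Rightarrow> nat" where
  "hamming_weight c = card {k. c $ k}"

definition bxor :: "bool^'n \<Rightarrow> bool^'n \<Rightarrow> bool^'n" where
  "bxor c c' = (\<chi> k. c $ k \<noteq> c' $ k)"

definition zero_word :: "bool^'n" where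
  "zero_word = (\<chi> k. False)"

definition binary_linear_code :: "(bool^'n) set \<Rightarrow> bool" where
  "binary_linear_code C \<longleftrightarrow> zero_word \<in> C \<and> (\<forall>a\<in>C. \<forall>b\<in>C. bxor a b \<in> C)"

definition bpsk :: "bool^'n \<Rightarrow> real^'n" where
  "bpsk c = (\<chi> k. if c $ k then -1 else 1)"

definition pairwise_error :: "real^'n \<Rightarrow> real^'n \<Rightarrow> (real^'n) set" where
  "pairwise_error s0 s = {y. norm (y - s) \<le> norm (y - s0)}"

definition awgn_output :: "real^'n \<Rightarrow> real \<Rightarrow> (real^'n) measure" where
  "awgn_output s0 \<sigma> = density lborel (\<lambda>y. ennreal (\<Prod>k\<in>UNIV. normal_density 0 \<sigma> (y $ k - s0 $ k)))"

end

theory Submission imports Defs begin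

text \<open>The event \<open>s\<^sub>0 \<rightarrow> s\<close> is the half-space of outputs whose noise \<open>y - s\<^sub>0\<close> has
  component at least \<open>\<parallel>s - s\<^sub>0\<parallel> / 2 = \<surd>W\<^sub>H(c)\<close> along the unit direction of \<open>s - s\<^sub>0\<close>.
  Hence no error occurs exactly when the noise coordinates \<open>(\<xi>\<^sub>1, \<xi>\<^sub>2, \<xi>\<^sub>3)\<close> in the frame
  \<open>e\<^sub>1, e\<^sub>2, e\<^sub>3\<close> lie in \<open>\<Omega>\<close>. An orthogonal transformation maps the frame to three coordinate
  axes and leaves the i.i.d. Gaussian noise invariant, so \<open>(\<xi>\<^sub>1, \<xi>\<^sub>2, \<xi>\<^sub>3)\<close> are again i.i.d.
  with variance \<open>\<sigma>\<^sup>2\<close>.\<close>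

section \<open>Lebesgue measure on \<open>real^'m\<close>\<close>

lemma Basis_real_vec_eq: "(Basis :: (real^'m) set) = range (\<lambda>k. axis k 1)"
  by (auto simp: Basis_vec_def)

lemma prod_Basis_real_vec: "(\<Prod>b\<in>(Basis :: (real^'m) set). f b) = (\<Prod>k\<in>UNIV. f (axis k 1))"
  unfolding Basis_real_vec_eq by (subst prod.reindex) (auto simp: inj_on_def axis_eq_axis)

lemma measurable_vec_lambda_PiM:
  assumes "sets M = sets (borel :: real measure)"
  shows "(\<lambda>x. vec_lambda x :: real^'m) \<in> borel_measurable (PiM UNIV (\<lambda>_::'m. M))"
proof -
  have "(\<lambda>x. x i) \<in> borel_measurable (PiM UNIV (\<lambda>_::'m. M))" for i
  proof -
    have "(\<lambda>x. x i) \<in> PiM UNIV (\<lambda>_::'m. M) \<rightarrow>\<^sub>M M"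
      by (rule measurable_component_singleton) simp
    then show ?thesis
      using measurable_cong_sets[OF refl assms] by metis
  qed
  then show ?thesis
    by (subst borel_measurable_euclidean_space) (simp add: Basis_real_vec_eq inner_axis)
qed

lemma lborel_vec_eq_distr_PiM:
  "(lborel :: (real^'m) measure) = distr (PiM UNIV (\<lambda>_::'m. lborel)) borel (\<lambda>x. vec_lambda x)"
proof (rule lborel_eqI)
  interpret product_sigma_finite "\<lambda>_::'m. lborel :: real measure" by standard
  have meas: "(\<lambda>x. vec_lambda x :: real^'m) \<in> borel_measurable (PiM UNIV (\<lambda>_::'m. lborel))"
    by (rule measurable_vec_lambda_PiM) simp
  fix l u :: "real^'m" assume le_Basis: "\<And>b. b \<in> Basis \<Longrightarrow> l \<bullet> b \<le> u \<bullet> b"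
  have le: "l $ k \<le> u $ k" for k
    using le_Basis[of "axis k 1"] by (simp add: Basis_real_vec_eq inner_axis)
  have box: "(\<lambda>x. vec_lambda x) -` box l u \<inter> space (PiM UNIV (\<lambda>_::'m. lborel))
      = PiE UNIV (\<lambda>k. {l$k<..<u$k})"
    by (auto simp: mem_box_cart space_PiM PiE_iff)
  have "emeasure (distr (PiM UNIV (\<lambda>_::'m. lborel)) borel (\<lambda>x. vec_lambda x)) (box l u)
      = emeasure (PiM UNIV (\<lambda>_::'m. lborel)) (PiE UNIV (\<lambda>k. {l$k<..<u$k}))"
    using meas by (subst emeasure_distr) (auto simp: box)
  also have "\<dots> = (\<Prod>k\<in>UNIV. ennreal (u$k - l$k))"
    using le by (subst emeasure_PiM) auto
  also have "\<dots> = ennreal (\<Prod>b\<in>Basis. (u - l) \<bullet> b)"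
    by (simp add: prod_Basis_real_vec inner_axis prod_ennreal le)
  finally show "emeasure (distr (PiM UNIV (\<lambda>_::'m. lborel)) borel (\<lambda>x. vec_lambda x)) (box l u)
      = (\<Prod>b\<in>Basis. (u - l) \<bullet> b)" .
qed (simp only: sets_distr)

lemma distr_lborel_orthogonal_transformation:
  fixes T :: "real^'m::{finite,wellorder} \<Rightarrow> real^'m::{finite,wellorder}"
  assumes T: "orthogonal_transformation T"
  shows "distr lborel borel T = lborel"
proof (rule lborel_eqI[symmetric])
  have lin: "linear T"
    using T orthogonal_transformation_linear by blast
  have [measurable]: "T \<in> borel_measurable borel"
    using lin by (simp add: borel_measurable_continuous_onI linear_continuous_on linear_linear)
  have T': "orthogonal_transformation (inv T)"
    using T orthogonal_transformation_inv by blast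
  fix l u :: "real^'m::{finite,wellorder}" assume le: "\<And>b. b \<in> Basis \<Longrightarrow> l \<bullet> b \<le> u \<bullet> b"
  have pre: "T -` box l u = inv T ` box l u"
    using T orthogonal_transformation_bij by (metis bij_vimage_eq_inv_image)
  have "open (T -` box l u)"
    using lin by (intro continuous_open_vimage)
      (auto intro!: linear_continuous_at simp: linear_conv_bounded_linear)
  then have open_image: "open (inv T ` box l u)"
    by (simp add: pre)
  have "inv T ` box l u \<in> lmeasurable"
    by (rule measurable_orthogonal_image[OF T']) simp
  have "emeasure (distr lborel borel T) (box l u) = emeasure lborel (inv T ` box l u)"
    by (simp add: emeasure_distr pre)
  also have "\<dots> = emeasure lebesgue (inv T ` box l u)"
    using open_image by (simp add: emeasure_completion borel_open)
  also have "\<dots> = measure lebesgue (inv T ` box l u)"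
    using \<open>inv T ` box l u \<in> lmeasurable\<close> by (simp add: emeasure_eq_measure2)
  also have "\<dots> = measure lebesgue (box l u)"
    using measure_orthogonal_image[OF T', of "box l u"] by simp
  also have "\<dots> = (\<Prod>b\<in>Basis. (u - l) \<bullet> b)"
    using le by (simp add: measure_completion measure_lborel_box_eq inner_diff_left prod_nonneg)
  finally show "emeasure (distr lborel borel T) (box l u) = (\<Prod>b\<in>Basis. (u - l) \<bullet> b)" .
qed simp

section \<open>Orthonormal frames\<close>

lemma orthonormal_extension_to_basis:
  fixes S :: "'a::euclidean_space set"
  assumes orth: "pairwise orthogonal S" and unit: "\<And>x. x \<in> S \<Longrightarrow> norm x = 1"
  obtains B where "S \<subseteq> B" "pairwise orthogonal B" "\<And>x. x \<in> B \<Longrightarrow> norm x = 1"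
    "independent B" "span B = UNIV"
proof -
  obtain U where U: "U \<inter> insert 0 S = {}" "pairwise orthogonal (S \<union> U)"
    "span (S \<union> U) = span (S \<union> UNIV)"
    using orthogonal_extension_strong[OF orth] by blast
  define B where "B = (\<lambda>x. x /\<^sub>R norm x) ` (S \<union> U)"
  have nonzero: "x \<noteq> 0" if "x \<in> S \<union> U" for x
    using that U(1) unit by force
  have "S \<subseteq> B"
    using unit by (force simp: B_def)
  moreover have unit_B: "norm x = 1" if "x \<in> B" for x
    using that nonzero by (auto simp: B_def)
  moreover have orth_B: "pairwise orthogonal B"
    unfolding pairwise_def
  proof (intro ballI impI)
    fix x y assume "x \<in> B" "y \<in> B" "x \<noteq> y"
    then obtain p q where "p \<in> S \<union> U" "q \<in> S \<union> U" "p \<noteq> q"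
      and "x = p /\<^sub>R norm p" "y = q /\<^sub>R norm q"
      by (auto simp: B_def)
    then show "orthogonal x y"
      using U(2) by (auto simp: pairwise_def orthogonal_clauses)
  qed
  moreover have "independent B"
    using pairwise_orthogonal_independent[OF orth_B] unit_B by force
  moreover have "span B = UNIV"
  proof -
    have "x \<in> span B" if "x \<in> S \<union> U" for x
    proof -
      have "norm x *\<^sub>R (x /\<^sub>R norm x) \<in> span B"
        using that by (intro span_mul span_base) (simp add: B_def)
      then show ?thesis
        using nonzero[OF that] by simp
    qed
    then have "span (S \<union> U) \<subseteq> span B"
      by (intro span_minimal) (auto simp: subspace_span)
    then show ?thesis
      using U(3) by auto
  qed
  ultimately show thesis
    using that by blast
qed

lemma orthonormal_triple_to_coordinates:
  fixes a b c :: "real^'m"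
  assumes "a \<bullet> a = 1" "b \<bullet> b = 1" "c \<bullet> c = 1" "a \<bullet> b = 0" "a \<bullet> c = 0" "b \<bullet> c = 0"
  obtains T :: "real^'m \<Rightarrow> real^'m" and k1 k2 k3 :: 'm where "orthogonal_transformation T"
    "\<And>w. T w $ k1 = w \<bullet> a" "\<And>w. T w $ k2 = w \<bullet> b" "\<And>w. T w $ k3 = w \<bullet> c"
    "k1 \<noteq> k2" "k1 \<noteq> k3" "k2 \<noteq> k3"
proof -
  have distinct: "a \<noteq> b" "a \<noteq> c" "b \<noteq> c"
    using assms by auto
  obtain B where B: "{a, b, c} \<subseteq> B" "pairwise orthogonal B" "\<And>x. x \<in> B \<Longrightarrow> norm x = 1"
    "independent B" "span B = UNIV"
    using orthonormal_extension_to_basis[of "{a, b, c}"] assms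
    by (auto simp: pairwise_def orthogonal_def inner_commute norm_eq_1)
  have "card B = CARD('m)"
    using basis_card_eq_dim[of B UNIV] B by (simp add: dim_UNIV)
  then obtain f where f: "bij_betw f (UNIV :: 'm set) B"
    using finite_same_card_bij[of "UNIV :: 'm set" B] independent_imp_finite[OF B(4)] by auto
  define A :: "real^'m^'m" where "A = (\<chi> i j. f i $ j)"
  have "orthogonal_matrix A"
    unfolding orthogonal_matrix_orthonormal_rows
  proof (intro conjI allI impI)
    fix i
    show "norm (row i A) = 1"
      using B(3) f by (simp add: row_def A_def vec_nth_inverse bij_betw_apply)
  next
    fix i j :: 'm assume "i \<noteq> j"
    then have "f i \<noteq> f j"
      using f by (auto simp: bij_betw_def inj_def)
    then show "orthogonal (row i A) (row j A)"
      using B(2) f by (simp add: row_def A_def vec_nth_inverse pairwise_def bij_betw_apply)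
  qed
  then have "orthogonal_transformation (\<lambda>w. A *v w)"
    by (simp add: orthogonal_transformation_matrix matrix_of_matrix_vector_mul matrix_vector_mul_linear)
  moreover have "(A *v w) $ i = w \<bullet> f i" for i w
    by (simp add: A_def matrix_vector_mult_def inner_vec_def mult.commute)
  moreover obtain k1 k2 k3 where "f k1 = a" "f k2 = b" "f k3 = c"
    using B(1) f by (metis bij_betw_inv_into_right insert_subset)
  ultimately show thesis
    using that[of "\<lambda>w. A *v w" k1 k2 k3] distinct by auto
qed

definition zero_extend :: "('n \<Rightarrow> 'm) \<Rightarrow> real^'n \<Rightarrow> real^'m" where
  "zero_extend \<iota> a = (\<chi> j. if j \<in> range \<iota> then a $ inv \<iota> j else 0)"

lemma inner_zero_extend:
  fixes \<iota> :: "'n::finite \<Rightarrow> 'm::finite"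
  assumes "inj \<iota>"
  shows "w \<bullet> zero_extend \<iota> a = (\<chi> k. w $ \<iota> k) \<bullet> a"
proof -
  have "w \<bullet> zero_extend \<iota> a = (\<Sum>j\<in>range \<iota>. w $ j * a $ inv \<iota> j)"
    unfolding inner_vec_def zero_extend_def by (rule sum.mono_neutral_cong_right) auto
  also have "\<dots> = (\<Sum>k\<in>UNIV. w $ \<iota> k * a $ k)"
    using assms by (subst sum.reindex) auto
  finally show ?thesis
    by (simp add: inner_vec_def)
qed

lemma inner_zero_extend_zero_extend:
  fixes \<iota> :: "'n::finite \<Rightarrow> 'm::finite"
  assumes "inj \<iota>"
  shows "zero_extend \<iota> a \<bullet> zero_extend \<iota> b = a \<bullet> b"
proof -
  have "(\<chi> k. zero_extend \<iota> a $ \<iota> k) = a"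
    using assms by (simp add: zero_extend_def vec_eq_iff)
  then show ?thesis
    by (simp add: inner_zero_extend[OF assms])
qed

lemma exists_inj_bit0: "\<exists>\<iota> :: 'n::finite \<Rightarrow> 'n bit0. inj \<iota>"
  using card_le_inj[of "UNIV :: 'n set" "UNIV :: 'n bit0 set"] by auto

lemma nn_integral_PiM_three_coordinates:
  fixes M :: "'a measure"
  assumes "sigma_finite_measure M" and f [measurable]: "f \<in> borel_measurable (M \<Otimes>\<^sub>M (M \<Otimes>\<^sub>M M))"
  shows "(\<integral>\<^sup>+y. f (y 0, y 1, y 2) \<partial>PiM {0,1,2::nat} (\<lambda>_. M)) = (\<integral>\<^sup>+p. f p \<partial>(M \<Otimes>\<^sub>M (M \<Otimes>\<^sub>M M)))"
proof -
  interpret M: sigma_finite_measure M by fact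
  interpret P: product_sigma_finite "\<lambda>_::nat. M" by standard
  interpret M2: pair_sigma_finite M M by standard
  let ?P = "\<lambda>I. PiM I (\<lambda>_::nat. M)"
  have "(\<lambda>y. f (y 0, y 1, y 2)) \<in> borel_measurable (?P (insert 0 {1,2}))"
    by measurable
  then have "(\<integral>\<^sup>+y. f (y 0, y 1, y 2) \<partial>?P {0,1,2}) = (\<integral>\<^sup>+a. (\<integral>\<^sup>+x. f (a, x 1, x 2) \<partial>?P {1,2}) \<partial>M)"
    by (subst P.product_nn_integral_insert_rev) simp_all
  also have "\<dots> = (\<integral>\<^sup>+a. (\<integral>\<^sup>+b. (\<integral>\<^sup>+x. f (a, b, x 2) \<partial>?P {2}) \<partial>M) \<partial>M)"
  proof (rule nn_integral_cong)
    fix a assume "a \<in> space M"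
    then have "(\<lambda>x. f (a, x 1, x 2)) \<in> borel_measurable (?P (insert 1 {2}))"
      by measurable
    then show "(\<integral>\<^sup>+x. f (a, x 1, x 2) \<partial>?P {1,2}) = (\<integral>\<^sup>+b. (\<integral>\<^sup>+x. f (a, b, x 2) \<partial>?P {2}) \<partial>M)"
      by (subst P.product_nn_integral_insert_rev) simp_all
  qed
  also have "\<dots> = (\<integral>\<^sup>+a. (\<integral>\<^sup>+b. (\<integral>\<^sup>+c. f (a, b, c) \<partial>M) \<partial>M) \<partial>M)"
  proof (rule nn_integral_cong, rule nn_integral_cong)
    fix a b assume "a \<in> space M" "b \<in> space M"
    then have "(\<lambda>c. f (a, b, c)) \<in> borel_measurable M"
      by measurable
    then show "(\<integral>\<^sup>+x. f (a, b, x 2) \<partial>?P {2}) = (\<integral>\<^sup>+c. f (a, b, c) \<partial>M)"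
      by (rule P.product_nn_integral_singleton)
  qed
  also have "\<dots> = (\<integral>\<^sup>+a. (\<integral>\<^sup>+q. f (a, q) \<partial>(M \<Otimes>\<^sub>M M)) \<partial>M)"
  proof (rule nn_integral_cong)
    fix a assume "a \<in> space M"
    then have "(\<lambda>q. f (a, q)) \<in> borel_measurable (M \<Otimes>\<^sub>M M)"
      by measurable
    then show "(\<integral>\<^sup>+b. (\<integral>\<^sup>+c. f (a, b, c) \<partial>M) \<partial>M) = (\<integral>\<^sup>+q. f (a, q) \<partial>(M \<Otimes>\<^sub>M M))"
      using M.nn_integral_fst[of "\<lambda>q. f (a, q)" M] by simp
  qed
  also have "\<dots> = (\<integral>\<^sup>+p. f p \<partial>(M \<Otimes>\<^sub>M (M \<Otimes>\<^sub>M M)))"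
    using M2.nn_integral_fst[of f M] by simp
  finally show ?thesis .
qed

lemma distr_PiM_three_coordinates:
  fixes M :: "'a measure" and k1 k2 k3 :: 'i
  assumes M: "prob_space M" and k: "k1 \<noteq> k2" "k1 \<noteq> k3" "k2 \<noteq> k3"
  shows "distr (PiM UNIV (\<lambda>_. M)) (M \<Otimes>\<^sub>M (M \<Otimes>\<^sub>M M)) (\<lambda>\<omega>. (\<omega> k1, \<omega> k2, \<omega> k3))
       = M \<Otimes>\<^sub>M (M \<Otimes>\<^sub>M M)"
proof -
  define f :: "nat \<Rightarrow> 'i" where "f n = (if n = 0 then k1 else if n = 1 then k2 else k3)" for n
  let ?P3 = "PiM {0,1,2::nat} (\<lambda>_. M)"
  let ?r = "\<lambda>\<omega>. \<lambda>n\<in>{0,1,2::nat}. \<omega> (f n)"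
  have "inj_on f {0,1,2::nat}"
    using k by (auto simp: f_def inj_on_def)
  then have reindex: "distr (PiM UNIV (\<lambda>_. M)) ?P3 ?r = ?P3"
    using distr_PiM_reindex[of UNIV "\<lambda>_. M" f "{0,1,2::nat}"] M by auto
  have [measurable]: "?r \<in> PiM UNIV (\<lambda>_. M) \<rightarrow>\<^sub>M ?P3"
    by (intro measurable_restrict measurable_component_singleton) auto
  have "distr (PiM UNIV (\<lambda>_. M)) (M \<Otimes>\<^sub>M (M \<Otimes>\<^sub>M M)) (\<lambda>\<omega>. (\<omega> k1, \<omega> k2, \<omega> k3))
      = distr (distr (PiM UNIV (\<lambda>_. M)) ?P3 ?r) (M \<Otimes>\<^sub>M (M \<Otimes>\<^sub>M M)) (\<lambda>y. (y 0, y 1, y 2))"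
    by (subst distr_distr) (auto simp: comp_def f_def)
  also have "\<dots> = distr ?P3 (M \<Otimes>\<^sub>M (M \<Otimes>\<^sub>M M)) (\<lambda>y. (y 0, y 1, y 2))"
    by (simp only: reindex)
  also have "\<dots> = M \<Otimes>\<^sub>M (M \<Otimes>\<^sub>M M)"
  proof (rule measure_eqI)
    fix S assume "S \<in> sets (distr ?P3 (M \<Otimes>\<^sub>M (M \<Otimes>\<^sub>M M)) (\<lambda>y. (y 0, y 1, y 2)))"
    then have S [measurable]: "S \<in> sets (M \<Otimes>\<^sub>M (M \<Otimes>\<^sub>M M))"
      by simp
    have "emeasure (distr ?P3 (M \<Otimes>\<^sub>M (M \<Otimes>\<^sub>M M)) (\<lambda>y. (y 0, y 1, y 2))) S
        = (\<integral>\<^sup>+p. indicator S p \<partial>distr ?P3 (M \<Otimes>\<^sub>M (M \<Otimes>\<^sub>M M)) (\<lambda>y. (y 0, y 1, y 2)))"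
      by (rule nn_integral_indicator[symmetric]) simp
    also have "\<dots> = (\<integral>\<^sup>+y. indicator S (y 0, y 1, y 2) \<partial>?P3)"
      by (rule nn_integral_distr) measurable
    also have "\<dots> = emeasure (M \<Otimes>\<^sub>M (M \<Otimes>\<^sub>M M)) S"
      using nn_integral_PiM_three_coordinates[OF prob_space_imp_sigma_finite[OF M], of "indicator S"]
      by simp
    finally show "emeasure (distr ?P3 (M \<Otimes>\<^sub>M (M \<Otimes>\<^sub>M M)) (\<lambda>y. (y 0, y 1, y 2))) S
        = emeasure (M \<Otimes>\<^sub>M (M \<Otimes>\<^sub>M M)) S" .
  qed simp
  finally show ?thesis .
qed

section \<open>The i.i.d. Gaussian measure\<close>

definition normal_measure :: "real \<Rightarrow> real measure" where
  "normal_measure \<sigma> = density lborel (\<lambda>x. ennreal (normal_density 0 \<sigma> x))"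

definition iid_normal :: "real \<Rightarrow> (real^'n) measure" where
  "iid_normal \<sigma> = density lborel (\<lambda>w. ennreal (\<Prod>k\<in>UNIV. normal_density 0 \<sigma> (w $ k)))"

lemma sets_normal_measure [measurable_cong, simp]: "sets (normal_measure \<sigma>) = sets borel"
  by (simp add: normal_measure_def)

lemma prob_space_normal_measure: "\<sigma> > 0 \<Longrightarrow> prob_space (normal_measure \<sigma>)"
  unfolding normal_measure_def by (rule prob_space_normal_density)

lemma sets_iid_normal [simp]: "sets (iid_normal \<sigma>) = sets borel"
  by (simp add: iid_normal_def)

lemma measurable_iid_normal_iff: "f \<in> iid_normal \<sigma> \<rightarrow>\<^sub>M N \<longleftrightarrow> f \<in> borel \<rightarrow>\<^sub>M N"
  by (simp only: measurable_cong_sets[OF sets_iid_normal refl])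

lemma measurable_vec_lambda_PiM_normal [measurable]:
  "(\<lambda>x. vec_lambda x :: real^'m) \<in> borel_measurable (PiM UNIV (\<lambda>_::'m. normal_measure \<sigma>))"
  by (rule measurable_vec_lambda_PiM) simp

lemma sets_normal_measure_cube [simp]:
  "sets (normal_measure \<sigma> \<Otimes>\<^sub>M (normal_measure \<sigma> \<Otimes>\<^sub>M normal_measure \<sigma>)) = sets borel"
proof -
  have "sets (normal_measure \<sigma> \<Otimes>\<^sub>M (normal_measure \<sigma> \<Otimes>\<^sub>M normal_measure \<sigma>))
      = sets (borel \<Otimes>\<^sub>M (borel \<Otimes>\<^sub>M (borel :: real measure)))"
    by (intro sets_pair_measure_cong) auto
  then show ?thesis
    by (simp only: borel_prod)
qed

lemma measurable_normal_measure_cube_iff: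
  "f \<in> M \<rightarrow>\<^sub>M normal_measure \<sigma> \<Otimes>\<^sub>M (normal_measure \<sigma> \<Otimes>\<^sub>M normal_measure \<sigma>) \<longleftrightarrow> f \<in> M \<rightarrow>\<^sub>M borel"
  by (simp only: measurable_cong_sets[OF refl sets_normal_measure_cube])

lemma density_PiM_normal_eq_PiM:
  fixes I :: "'i set"
  assumes I: "finite I" and \<sigma>: "\<sigma> > 0"
  shows "density (PiM I (\<lambda>_. lborel)) (\<lambda>x. \<Prod>i\<in>I. ennreal (normal_density 0 \<sigma> (x i)))
       = PiM I (\<lambda>_. normal_measure \<sigma>)"
proof -
  interpret prob_space "normal_measure \<sigma>"
    by (rule prob_space_normal_measure[OF \<sigma>])
  interpret N: product_sigma_finite "\<lambda>_::'i. normal_measure \<sigma>" by standard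
  interpret L: product_sigma_finite "\<lambda>_::'i. lborel :: real measure" by standard
  have sets_eq: "sets (PiM I (\<lambda>_. lborel :: real measure)) = sets (PiM I (\<lambda>_. normal_measure \<sigma>))"
    by (rule sets_PiM_cong) auto
  show ?thesis
  proof (rule N.PiM_eqI[OF I])
    show "sets (density (PiM I (\<lambda>_. lborel)) (\<lambda>x. \<Prod>i\<in>I. ennreal (normal_density 0 \<sigma> (x i))))
        = sets (PiM I (\<lambda>_. normal_measure \<sigma>))"
      using sets_eq by simp
  next
    fix A assume "\<And>i. i \<in> I \<Longrightarrow> A i \<in> sets (normal_measure \<sigma>)"
    then have A: "\<And>i. i \<in> I \<Longrightarrow> A i \<in> sets borel"
      by simp
    have "PiE I A \<in> sets (PiM I (\<lambda>_. lborel :: real measure))"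
      using A by (intro sets_PiM_I_finite I) auto
    have "emeasure (density (PiM I (\<lambda>_. lborel)) (\<lambda>x. \<Prod>i\<in>I. ennreal (normal_density 0 \<sigma> (x i)))) (PiE I A)
       = (\<integral>\<^sup>+x. (\<Prod>i\<in>I. ennreal (normal_density 0 \<sigma> (x i))) * indicator (PiE I A) x \<partial>PiM I (\<lambda>_. lborel))"
      using \<open>PiE I A \<in> sets (PiM I (\<lambda>_. lborel))\<close> by (subst emeasure_density) auto
    also have "\<dots> = (\<integral>\<^sup>+x. (\<Prod>i\<in>I. ennreal (normal_density 0 \<sigma> (x i)) * indicator (A i) (x i)) \<partial>PiM I (\<lambda>_. lborel))"
      using I by (intro nn_integral_cong)
        (auto simp: space_PiM indicator_def prod.distrib PiE_iff prod_zero)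
    also have "\<dots> = (\<Prod>i\<in>I. \<integral>\<^sup>+y. ennreal (normal_density 0 \<sigma> y) * indicator (A i) y \<partial>lborel)"
      using A by (intro L.product_nn_integral_prod I) auto
    also have "\<dots> = (\<Prod>i\<in>I. emeasure (normal_measure \<sigma>) (A i))"
      using A by (intro prod.cong refl) (simp add: normal_measure_def emeasure_density)
    finally show "emeasure (density (PiM I (\<lambda>_. lborel)) (\<lambda>x. \<Prod>i\<in>I. ennreal (normal_density 0 \<sigma> (x i)))) (PiE I A)
        = (\<Prod>i\<in>I. emeasure (normal_measure \<sigma>) (A i))" .
  qed
qed

lemma iid_normal_eq_distr_PiM:
  assumes "\<sigma> > 0"
  shows "(iid_normal \<sigma> :: (real^'m) measure)
       = distr (PiM UNIV (\<lambda>_::'m. normal_measure \<sigma>)) borel (\<lambda>x. vec_lambda x)"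
proof -
  have [measurable]: "(\<lambda>x. vec_lambda x :: real^'m) \<in> PiM UNIV (\<lambda>_::'m. lborel) \<rightarrow>\<^sub>M borel"
    by (rule measurable_vec_lambda_PiM) simp
  have "(iid_normal \<sigma> :: (real^'m) measure)
      = density (distr (PiM UNIV (\<lambda>_::'m. lborel)) borel (\<lambda>x. vec_lambda x))
          (\<lambda>w::real^'m. ennreal (\<Prod>k\<in>UNIV. normal_density 0 \<sigma> (w $ k)))"
    by (simp only: iid_normal_def lborel_vec_eq_distr_PiM[symmetric])
  also have "\<dots> = distr (density (PiM UNIV (\<lambda>_::'m. lborel))
      (\<lambda>x. ennreal (\<Prod>k\<in>UNIV. normal_density 0 \<sigma> (x k)))) borel (\<lambda>x. vec_lambda x)"
    by (subst density_distr) auto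
  also have "density (PiM UNIV (\<lambda>_::'m. lborel)) (\<lambda>x. ennreal (\<Prod>k\<in>UNIV. normal_density 0 \<sigma> (x k)))
      = PiM UNIV (\<lambda>_::'m. normal_measure \<sigma>)"
    using density_PiM_normal_eq_PiM[OF _ assms, of "UNIV::'m set"] by (simp add: prod_ennreal)
  finally show ?thesis .
qed

lemma prob_space_iid_normal: "\<sigma> > 0 \<Longrightarrow> prob_space (iid_normal \<sigma>)"
  by (simp add: iid_normal_eq_distr_PiM prob_space_PiM prob_space_normal_measure
      prob_space.prob_space_distr)

lemma prod_normal_density_eq_exp_norm:
  fixes w :: "real^'m"
  shows "(\<Prod>k\<in>UNIV. normal_density 0 \<sigma> (w $ k))
       = (1 / sqrt (2*pi*\<sigma>\<^sup>2)) ^ CARD('m) * exp (- (norm w)\<^sup>2 / (2*\<sigma>\<^sup>2))"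
proof -
  have "(norm w)\<^sup>2 = w \<bullet> w"
    by (simp add: dot_square_norm)
  also have "\<dots> = (\<Sum>k\<in>UNIV. (w $ k)\<^sup>2)"
    by (simp add: inner_vec_def power2_eq_square)
  finally have "(norm w)\<^sup>2 = (\<Sum>k\<in>UNIV. (w $ k)\<^sup>2)" .
  then have sum_eq: "(\<Sum>k\<in>UNIV. - (w $ k)\<^sup>2 / (2*\<sigma>\<^sup>2)) = - (norm w)\<^sup>2 / (2*\<sigma>\<^sup>2)"
    by (simp add: sum_divide_distrib sum_negf)
  have "(\<Prod>k\<in>UNIV. normal_density 0 \<sigma> (w $ k))
      = (\<Prod>k\<in>UNIV. (1 / sqrt (2*pi*\<sigma>\<^sup>2)) * exp (- (w $ k)\<^sup>2 / (2*\<sigma>\<^sup>2)))"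
    by (simp add: normal_density_def)
  also have "\<dots> = (1 / sqrt (2*pi*\<sigma>\<^sup>2)) ^ CARD('m) * exp (\<Sum>k\<in>UNIV. - (w $ k)\<^sup>2 / (2*\<sigma>\<^sup>2))"
    by (simp only: prod.distrib prod_constant exp_sum[OF finite_class.finite_UNIV])
  finally show ?thesis
    by (simp only: sum_eq)
qed

lemma distr_iid_normal_orthogonal_transformation:
  fixes T :: "real^'m::{finite,wellorder} \<Rightarrow> real^'m::{finite,wellorder}"
  assumes T: "orthogonal_transformation T"
  shows "distr (iid_normal \<sigma>) borel T = iid_normal \<sigma>"
proof -
  have [measurable]: "T \<in> borel_measurable borel"
    using orthogonal_transformation_linear[OF T]
    by (simp add: borel_measurable_continuous_onI linear_continuous_on linear_linear)
  have invariant: "(\<lambda>w. ennreal (\<Prod>k\<in>UNIV. normal_density 0 \<sigma> (T w $ k)))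
      = (\<lambda>w. ennreal (\<Prod>k\<in>UNIV. normal_density 0 \<sigma> (w $ k)))"
    using T by (simp add: prod_normal_density_eq_exp_norm orthogonal_transformation_norm)
  have "iid_normal \<sigma> = density (distr lborel borel T)
      (\<lambda>w. ennreal (\<Prod>k\<in>UNIV. normal_density 0 \<sigma> (w $ k)))"
    by (simp only: iid_normal_def distr_lborel_orthogonal_transformation[OF T])
  also have "\<dots> = distr (density lborel
      (\<lambda>w. ennreal (\<Prod>k\<in>UNIV. normal_density 0 \<sigma> (T w $ k)))) borel T"
    by (rule density_distr) auto
  finally show ?thesis
    by (simp only: invariant iid_normal_def)
qed

lemma distr_iid_normal_coordinates:
  fixes k1 k2 k3 :: "'m::finite"
  assumes \<sigma>: "\<sigma> > 0" and k: "k1 \<noteq> k2" "k1 \<noteq> k3" "k2 \<noteq> k3"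
  shows "distr (iid_normal \<sigma> :: (real^'m) measure)
           (normal_measure \<sigma> \<Otimes>\<^sub>M (normal_measure \<sigma> \<Otimes>\<^sub>M normal_measure \<sigma>)) (\<lambda>v. (v $ k1, v $ k2, v $ k3))
       = normal_measure \<sigma> \<Otimes>\<^sub>M (normal_measure \<sigma> \<Otimes>\<^sub>M normal_measure \<sigma>)"
    (is "distr _ ?N3 ?g = _")
proof -
  have g: "?g \<in> borel \<rightarrow>\<^sub>M ?N3"
    unfolding measurable_normal_measure_cube_iff by measurable
  have "distr (iid_normal \<sigma>) ?N3 ?g = distr (PiM UNIV (\<lambda>_::'m. normal_measure \<sigma>)) ?N3 (?g \<circ> vec_lambda)"
    unfolding iid_normal_eq_distr_PiM[OF \<sigma>] by (rule distr_distr[OF g measurable_vec_lambda_PiM_normal])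
  also have "?g \<circ> vec_lambda = (\<lambda>\<omega>. (\<omega> k1, \<omega> k2, \<omega> k3))"
    by (simp only: comp_def vec_lambda_beta)
  finally show ?thesis
    by (simp only: distr_PiM_three_coordinates[OF prob_space_normal_measure[OF \<sigma>] k])
qed

lemma distr_iid_normal_orthonormal_wellorder:
  fixes a1 a2 a3 :: "real^'m::{finite,wellorder}"
  assumes \<sigma>: "\<sigma> > 0"
    and orthonormal: "a1 \<bullet> a1 = 1" "a2 \<bullet> a2 = 1" "a3 \<bullet> a3 = 1" "a1 \<bullet> a2 = 0" "a1 \<bullet> a3 = 0" "a2 \<bullet> a3 = 0"
  shows "distr (iid_normal \<sigma>) (normal_measure \<sigma> \<Otimes>\<^sub>M (normal_measure \<sigma> \<Otimes>\<^sub>M normal_measure \<sigma>))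
           (\<lambda>w. (w \<bullet> a1, w \<bullet> a2, w \<bullet> a3))
       = normal_measure \<sigma> \<Otimes>\<^sub>M (normal_measure \<sigma> \<Otimes>\<^sub>M normal_measure \<sigma>)"
    (is "distr _ ?N3 _ = _")
proof -
  obtain T :: "(real, 'm) vec \<Rightarrow> (real, 'm) vec" and k1 k2 k3 where T: "orthogonal_transformation T"
    and coord: "\<And>w. T w $ k1 = w \<bullet> a1" "\<And>w. T w $ k2 = w \<bullet> a2" "\<And>w. T w $ k3 = w \<bullet> a3"
    and k: "k1 \<noteq> k2" "k1 \<noteq> k3" "k2 \<noteq> k3"
    using orthonormal_triple_to_coordinates[OF orthonormal] by blast
  let ?g = "\<lambda>v. (v $ k1, v $ k2, v $ k3)"
  have "T \<in> borel \<rightarrow>\<^sub>M borel"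
    using orthogonal_transformation_linear[OF T]
    by (simp add: borel_measurable_continuous_onI linear_continuous_on linear_linear)
  then have T_measurable: "T \<in> iid_normal \<sigma> \<rightarrow>\<^sub>M borel"
    by (simp only: measurable_iid_normal_iff)
  have g: "?g \<in> borel \<rightarrow>\<^sub>M ?N3"
    unfolding measurable_normal_measure_cube_iff by measurable
  have "distr (iid_normal \<sigma>) ?N3 (\<lambda>w. (w \<bullet> a1, w \<bullet> a2, w \<bullet> a3)) = distr (iid_normal \<sigma>) ?N3 (?g \<circ> T)"
    by (simp only: comp_def coord)
  also have "\<dots> = distr (distr (iid_normal \<sigma>) borel T) ?N3 ?g"
    by (rule distr_distr[OF g T_measurable, symmetric])
  also have "\<dots> = ?N3"
    by (simp only: distr_iid_normal_orthogonal_transformation[OF T] distr_iid_normal_coordinates[OF \<sigma> k])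
  finally show ?thesis .
qed

lemma distr_iid_normal_reindex:
  fixes \<iota> :: "'n::finite \<Rightarrow> 'm::finite"
  assumes \<sigma>: "\<sigma> > 0" and \<iota>: "inj \<iota>"
  shows "distr (iid_normal \<sigma> :: (real^'m) measure) borel (\<lambda>w. \<chi> k. w $ \<iota> k) = iid_normal \<sigma>"
    (is "distr _ _ ?s = _")
proof -
  let ?Pm = "PiM UNIV (\<lambda>_::'m. normal_measure \<sigma>)"
  let ?Pn = "PiM UNIV (\<lambda>_::'n. normal_measure \<sigma>)"
  let ?r = "\<lambda>\<omega>. \<lambda>k\<in>UNIV. \<omega> (\<iota> k)"
  have reindex: "distr ?Pm ?Pn ?r = ?Pn"
    using distr_PiM_reindex[of UNIV "\<lambda>_. normal_measure \<sigma>" \<iota> UNIV] prob_space_normal_measure[OF \<sigma>] \<iota>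
    by auto
  have r: "?r \<in> ?Pm \<rightarrow>\<^sub>M ?Pn"
    by (intro measurable_restrict measurable_component_singleton) auto
  have s: "?s \<in> borel \<rightarrow>\<^sub>M borel"
    by (intro borel_measurable_continuous_onI continuous_on_vec_lambda continuous_intros)
  have "distr (iid_normal \<sigma>) borel ?s = distr ?Pm borel (?s \<circ> vec_lambda)"
    unfolding iid_normal_eq_distr_PiM[OF \<sigma>] by (rule distr_distr[OF s measurable_vec_lambda_PiM_normal])
  also have "?s \<circ> vec_lambda = vec_lambda \<circ> ?r"
    by (simp add: fun_eq_iff vec_eq_iff)
  also have "distr ?Pm borel (vec_lambda \<circ> ?r) = distr (distr ?Pm ?Pn ?r) borel vec_lambda"
    by (rule distr_distr[OF measurable_vec_lambda_PiM_normal r, symmetric])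
  finally show ?thesis
    by (simp only: reindex iid_normal_eq_distr_PiM[OF \<sigma>])
qed

text \<open>The invariance of Lebesgue measure under orthogonal maps (\<open>measure_orthogonal_image\<close>) needs a
  well-ordered index type; \<open>'n bit0\<close> is one and contains a copy of \<open>'n\<close>, and the coordinates of
  \<open>\<real>\<^sup>n\<close> are the restriction of those of \<open>\<real>\<^sup>2\<^sup>n\<close>.\<close>

lemma distr_iid_normal_orthonormal:
  fixes e1 e2 e3 :: "real^'n"
  assumes \<sigma>: "\<sigma> > 0"
    and orthonormal: "e1 \<bullet> e1 = 1" "e2 \<bullet> e2 = 1" "e3 \<bullet> e3 = 1" "e1 \<bullet> e2 = 0" "e1 \<bullet> e3 = 0" "e2 \<bullet> e3 = 0"
  shows "distr (iid_normal \<sigma>) (normal_measure \<sigma> \<Otimes>\<^sub>M (normal_measure \<sigma> \<Otimes>\<^sub>M normal_measure \<sigma>))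
           (\<lambda>z. (z \<bullet> e1, z \<bullet> e2, z \<bullet> e3))
       = normal_measure \<sigma> \<Otimes>\<^sub>M (normal_measure \<sigma> \<Otimes>\<^sub>M normal_measure \<sigma>)"
    (is "distr _ ?N3 ?p = _")
proof -
  obtain \<iota> :: "'n \<Rightarrow> 'n bit0" where \<iota>: "inj \<iota>"
    using exists_inj_bit0 by blast
  let ?e = "zero_extend \<iota>"
  let ?s = "\<lambda>w::real^'n bit0. \<chi> k. w $ \<iota> k"
  have s: "?s \<in> iid_normal \<sigma> \<rightarrow>\<^sub>M borel"
    unfolding measurable_iid_normal_iff
    by (intro borel_measurable_continuous_onI continuous_on_vec_lambda continuous_intros)
  have p: "?p \<in> borel \<rightarrow>\<^sub>M ?N3"
    unfolding measurable_normal_measure_cube_iff by measurable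
  have "distr (iid_normal \<sigma>) ?N3 ?p = distr (distr (iid_normal \<sigma>) borel ?s) ?N3 ?p"
    by (simp only: distr_iid_normal_reindex[OF \<sigma> \<iota>])
  also have "\<dots> = distr (iid_normal \<sigma>) ?N3 (?p \<circ> ?s)"
    by (rule distr_distr[OF p s])
  also have "?p \<circ> ?s = (\<lambda>w. (w \<bullet> ?e e1, w \<bullet> ?e e2, w \<bullet> ?e e3))"
    by (simp only: comp_def inner_zero_extend[OF \<iota>])
  also have "distr (iid_normal \<sigma>) ?N3 (\<lambda>w. (w \<bullet> ?e e1, w \<bullet> ?e e2, w \<bullet> ?e e3)) = ?N3"
    using orthonormal
    by (intro distr_iid_normal_orthonormal_wellorder \<sigma>) (simp_all only: inner_zero_extend_zero_extend[OF \<iota>])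
  finally show ?thesis .
qed

lemma normal_measure_cube_eq_density:
  assumes \<sigma>: "\<sigma> > 0"
  shows "normal_measure \<sigma> \<Otimes>\<^sub>M (normal_measure \<sigma> \<Otimes>\<^sub>M normal_measure \<sigma>) =
    density lborel (\<lambda>(a, b, c). ennreal (normal_density 0 \<sigma> a * normal_density 0 \<sigma> b * normal_density 0 \<sigma> c))"
proof -
  let ?f = "\<lambda>x. ennreal (normal_density 0 \<sigma> x)"
  interpret N: prob_space "normal_measure \<sigma>"
    by (rule prob_space_normal_measure[OF \<sigma>])
  have "prob_space (normal_measure \<sigma> \<Otimes>\<^sub>M normal_measure \<sigma>)"
    by (intro prob_space_pair N.prob_space_axioms)
  moreover have square: "normal_measure \<sigma> \<Otimes>\<^sub>M normal_measure \<sigma> = density lborel (\<lambda>(b, c). ?f b * ?f c)"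
  proof -
    have "normal_measure \<sigma> \<Otimes>\<^sub>M normal_measure \<sigma> = density (lborel \<Otimes>\<^sub>M lborel) (\<lambda>(b, c). ?f b * ?f c)"
      unfolding normal_measure_def
      by (rule pair_measure_density)
        (auto simp: sigma_finite_lborel N.sigma_finite_measure_axioms[unfolded normal_measure_def])
    then show ?thesis
      by (simp only: lborel_prod)
  qed
  moreover have "(\<lambda>(b, c). ?f b * ?f c) \<in> borel_measurable (borel :: (real \<times> real) measure)"
    unfolding case_prod_beta' borel_prod[symmetric] by measurable
  ultimately have "normal_measure \<sigma> \<Otimes>\<^sub>M (normal_measure \<sigma> \<Otimes>\<^sub>M normal_measure \<sigma>)
      = density (lborel \<Otimes>\<^sub>M lborel) (\<lambda>(a, q). ?f a * (\<lambda>(b, c). ?f b * ?f c) q)"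
    unfolding square unfolding normal_measure_def
    by (intro pair_measure_density) (auto simp: sigma_finite_lborel prob_space_imp_sigma_finite)
  also have "\<dots> = density lborel (\<lambda>(a, b, c). ennreal (normal_density 0 \<sigma> a * normal_density 0 \<sigma> b * normal_density 0 \<sigma> c))"
    by (simp only: lborel_prod) (auto intro!: arg_cong[where f="density lborel"] simp: ennreal_mult mult.assoc)
  finally show ?thesis .
qed

lemma measure_normal_measure_cube:
  assumes \<sigma>: "\<sigma> > 0" and \<Omega>: "\<Omega> \<in> sets borel"
  shows "measure (normal_measure \<sigma> \<Otimes>\<^sub>M (normal_measure \<sigma> \<Otimes>\<^sub>M normal_measure \<sigma>)) \<Omega>
       = set_lebesgue_integral lborel \<Omega>
           (\<lambda>(a, b, c). normal_density 0 \<sigma> a * normal_density 0 \<sigma> b * normal_density 0 \<sigma> c)"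
    (is "_ = set_lebesgue_integral lborel \<Omega> ?h")
proof -
  have h_eq: "?h = (\<lambda>p. normal_density 0 \<sigma> (fst p) * normal_density 0 \<sigma> (fst (snd p)) * normal_density 0 \<sigma> (snd (snd p)))"
    by (simp add: fun_eq_iff split_beta)
  have "?h \<in> borel_measurable (borel :: (real \<times> real \<times> real) measure)"
    unfolding h_eq borel_prod[symmetric] by measurable
  then have h_measurable: "?h \<in> borel_measurable lborel"
    by (simp add: measurable_lborel1)
  have "normal_measure \<sigma> \<Otimes>\<^sub>M (normal_measure \<sigma> \<Otimes>\<^sub>M normal_measure \<sigma>) = density lborel (\<lambda>p. ennreal (?h p))"
    unfolding normal_measure_cube_eq_density[OF \<sigma>]
    by (rule arg_cong[where f="density lborel"]) (simp add: fun_eq_iff)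
  then have "measure (normal_measure \<sigma> \<Otimes>\<^sub>M (normal_measure \<sigma> \<Otimes>\<^sub>M normal_measure \<sigma>)) \<Omega>
      = enn2real (emeasure (density lborel (\<lambda>p. ennreal (?h p))) \<Omega>)"
    by (simp add: measure_def)
  also have "emeasure (density lborel (\<lambda>p. ennreal (?h p))) \<Omega> = (\<integral>\<^sup>+p. ennreal (?h p) * indicator \<Omega> p \<partial>lborel)"
    using \<Omega> h_measurable by (subst emeasure_density) (auto simp: measurable_lborel1)
  also have "(\<integral>\<^sup>+p. ennreal (?h p) * indicator \<Omega> p \<partial>lborel) = (\<integral>\<^sup>+p. ennreal (indicator \<Omega> p *\<^sub>R ?h p) \<partial>lborel)"
    by (intro nn_integral_cong) (simp split: split_indicator)
  also have "enn2real \<dots> = set_lebesgue_integral lborel \<Omega> ?h"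
    unfolding set_lebesgue_integral_def
    using \<Omega> h_measurable
    by (intro integral_eq_nn_integral[symmetric])
      (auto simp: measurable_lborel1 h_eq split: split_indicator)
  finally show ?thesis .
qed

section \<open>The AWGN channel with BPSK signalling\<close>

lemma awgn_output_eq_distr_iid_normal:
  "awgn_output s0 \<sigma> = distr (iid_normal \<sigma>) borel ((+) s0)"
proof -
  have "awgn_output s0 \<sigma> = density (distr lborel borel ((+) s0))
      (\<lambda>y. ennreal (\<Prod>k\<in>UNIV. normal_density 0 \<sigma> (y $ k - s0 $ k)))"
    by (simp add: awgn_output_def lborel_distr_plus)
  also have "\<dots> = distr (density lborel
      (\<lambda>z. ennreal (\<Prod>k\<in>UNIV. normal_density 0 \<sigma> ((s0 + z) $ k - s0 $ k)))) borel ((+) s0)"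
    by (rule density_distr) auto
  finally show ?thesis
    by (simp add: iid_normal_def)
qed

lemma sets_awgn_output [simp]: "sets (awgn_output s0 \<sigma>) = sets borel"
  by (simp add: awgn_output_def)

lemma space_awgn_output [simp]: "space (awgn_output s0 \<sigma>) = UNIV"
  by (simp add: awgn_output_def)

lemma prob_space_awgn_output:
  assumes "\<sigma> > 0"
  shows "prob_space (awgn_output s0 \<sigma>)"
proof -
  have "(+) s0 \<in> iid_normal \<sigma> \<rightarrow>\<^sub>M borel"
    unfolding measurable_iid_normal_iff by measurable
  then show ?thesis
    unfolding awgn_output_eq_distr_iid_normal
    by (rule prob_space.prob_space_distr[OF prob_space_iid_normal[OF assms]])
qed

lemma distr_awgn_output_orthonormal:
  fixes e1 e2 e3 s0 :: "real^'n"
  assumes \<sigma>: "\<sigma> > 0"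
    and orthonormal: "e1 \<bullet> e1 = 1" "e2 \<bullet> e2 = 1" "e3 \<bullet> e3 = 1" "e1 \<bullet> e2 = 0" "e1 \<bullet> e3 = 0" "e2 \<bullet> e3 = 0"
  shows "distr (awgn_output s0 \<sigma>) (normal_measure \<sigma> \<Otimes>\<^sub>M (normal_measure \<sigma> \<Otimes>\<^sub>M normal_measure \<sigma>))
           (\<lambda>y. ((y - s0) \<bullet> e1, (y - s0) \<bullet> e2, (y - s0) \<bullet> e3))
       = normal_measure \<sigma> \<Otimes>\<^sub>M (normal_measure \<sigma> \<Otimes>\<^sub>M normal_measure \<sigma>)"
    (is "distr _ ?N3 ?\<xi> = _")
proof -
  have \<xi>: "?\<xi> \<in> borel \<rightarrow>\<^sub>M ?N3"
    unfolding measurable_normal_measure_cube_iff by measurable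
  have shift: "(+) s0 \<in> iid_normal \<sigma> \<rightarrow>\<^sub>M borel"
    unfolding measurable_iid_normal_iff by measurable
  have "distr (awgn_output s0 \<sigma>) ?N3 ?\<xi> = distr (iid_normal \<sigma>) ?N3 (?\<xi> \<circ> (+) s0)"
    unfolding awgn_output_eq_distr_iid_normal by (rule distr_distr[OF \<xi> shift])
  also have "?\<xi> \<circ> (+) s0 = (\<lambda>z. (z \<bullet> e1, z \<bullet> e2, z \<bullet> e3))"
    by (simp add: comp_def)
  finally show ?thesis
    by (simp only: distr_iid_normal_orthonormal[OF \<sigma> orthonormal])
qed

lemma measure_awgn_output_orthonormal_coordinates:
  fixes e1 e2 e3 s0 :: "real^'n"
  assumes \<sigma>: "\<sigma> > 0"
    and orthonormal: "e1 \<bullet> e1 = 1" "e2 \<bullet> e2 = 1" "e3 \<bullet> e3 = 1" "e1 \<bullet> e2 = 0" "e1 \<bullet> e3 = 0" "e2 \<bullet> e3 = 0"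
    and \<Omega>: "\<Omega> \<in> sets borel"
  shows "measure (awgn_output s0 \<sigma>) {y. ((y - s0) \<bullet> e1, (y - s0) \<bullet> e2, (y - s0) \<bullet> e3) \<in> \<Omega>}
       = set_lebesgue_integral lborel \<Omega>
           (\<lambda>(a, b, c). normal_density 0 \<sigma> a * normal_density 0 \<sigma> b * normal_density 0 \<sigma> c)"
proof -
  let ?N3 = "normal_measure \<sigma> \<Otimes>\<^sub>M (normal_measure \<sigma> \<Otimes>\<^sub>M normal_measure \<sigma>)"
  let ?\<xi> = "\<lambda>y. ((y - s0) \<bullet> e1, (y - s0) \<bullet> e2, (y - s0) \<bullet> e3)"
  have \<xi>: "?\<xi> \<in> awgn_output s0 \<sigma> \<rightarrow>\<^sub>M ?N3"
    unfolding measurable_normal_measure_cube_iff measurable_cong_sets[OF sets_awgn_output refl]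
    by measurable
  have "\<Omega> \<in> sets ?N3"
    using \<Omega> by (simp only: sets_normal_measure_cube)
  then have "measure (awgn_output s0 \<sigma>) {y. ?\<xi> y \<in> \<Omega>} = measure (distr (awgn_output s0 \<sigma>) ?N3 ?\<xi>) \<Omega>"
    by (simp add: measure_distr[OF \<xi>] vimage_def)
  also have "\<dots> = measure ?N3 \<Omega>"
    by (simp only: distr_awgn_output_orthonormal[OF \<sigma> orthonormal])
  also have "\<dots> = set_lebesgue_integral lborel \<Omega>
      (\<lambda>(a, b, c). normal_density 0 \<sigma> a * normal_density 0 \<sigma> b * normal_density 0 \<sigma> c)"
    by (rule measure_normal_measure_cube[OF \<sigma> \<Omega>])
  finally show ?thesis .
qed

lemma pairwise_error_iff_inner:
  fixes s0 s u y :: "real^'n"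
  assumes "s \<noteq> s0" and dir: "s - s0 = norm (s - s0) *\<^sub>R u"
  shows "y \<in> pairwise_error s0 s \<longleftrightarrow> norm (s - s0) / 2 \<le> (y - s0) \<bullet> u"
proof -
  define d where "d = s - s0"
  define z where "z = y - s0"
  define r where "r = norm d"
  have "r > 0"
    using assms(1) by (simp add: r_def d_def)
  have d: "d = r *\<^sub>R u"
    using dir by (simp add: d_def r_def)
  have "r = r * norm u"
    using d \<open>r > 0\<close> by (metis r_def norm_scaleR abs_of_pos)
  then have "u \<bullet> u = 1"
    using \<open>r > 0\<close> by (simp add: dot_square_norm)
  have "y \<in> pairwise_error s0 s \<longleftrightarrow> norm (z - d) \<le> norm z"
    by (simp add: pairwise_error_def z_def d_def)
  also have "\<dots> \<longleftrightarrow> (z - d) \<bullet> (z - d) \<le> z \<bullet> z"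
    by (simp add: norm_le)
  also have "\<dots> \<longleftrightarrow> r * r \<le> 2 * r * (z \<bullet> u)"
    by (simp add: d inner_diff_left inner_diff_right inner_commute algebra_simps \<open>u \<bullet> u = 1\<close>)
  also have "\<dots> \<longleftrightarrow> r / 2 \<le> z \<bullet> u"
    using \<open>r > 0\<close> by (auto simp: field_simps)
  finally show ?thesis
    by (simp add: r_def d_def z_def)
qed

lemma norm_bpsk_minus_zero_word:
  "norm (bpsk c - bpsk zero_word) = 2 * sqrt (real (hamming_weight c))"
proof -
  have "(bpsk c - bpsk zero_word) \<bullet> (bpsk c - bpsk zero_word) = (\<Sum>k\<in>UNIV. if c $ k then 4 else 0)"
    by (auto simp: inner_vec_def bpsk_def zero_word_def intro!: sum.cong)
  also have "\<dots> = 4 * real (hamming_weight c)"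
    by (simp add: sum.If_cases hamming_weight_def)
  finally have "norm (bpsk c - bpsk zero_word) = sqrt (4 * real (hamming_weight c))"
    by (simp add: norm_eq_sqrt_inner)
  then show ?thesis
    by (simp add: real_sqrt_mult)
qed

lemma bpsk_eq_iff [simp]: "bpsk c = bpsk c' \<longleftrightarrow> c = c'"
  by (auto simp: bpsk_def vec_eq_iff)

lemma pairwise_error_zero_word_iff:
  assumes "c \<noteq> zero_word"
    and "bpsk c - bpsk zero_word = norm (bpsk c - bpsk zero_word) *\<^sub>R u"
  shows "y \<in> pairwise_error (bpsk zero_word) (bpsk c) \<longleftrightarrow>
         sqrt (real (hamming_weight c)) \<le> (y - bpsk zero_word) \<bullet> u"
proof -
  have "bpsk c \<noteq> bpsk zero_word"
    using assms(1) by simp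
  from pairwise_error_iff_inner[OF this assms(2)] show ?thesis
    by (simp add: norm_bpsk_minus_zero_word)
qed

text \<open>Besides \<open>\<sigma> > 0\<close> and distinctness, the proof uses only the orthonormality of the frame and the
  three direction equations \<open>ax1\<close>, \<open>theta(3)\<close>, \<open>angles(3)\<close>.\<close>

theorem lemma2:
  fixes C :: "(bool^'n) set"
    and c1 c2 c :: "bool^'n"
    and e1 e2 e3 :: "real^'n"
    and \<theta> \<alpha> \<phi> \<sigma> :: real
  assumes lin: "binary_linear_code C"
    and mem: "c1 \<in> C" "c2 \<in> C" "c \<in> C"
    and distinct: "distinct [zero_word, c1, c2, c]"
    and ortho: "e1 \<bullet> e1 = 1" "e2 \<bullet> e2 = 1" "e3 \<bullet> e3 = 1"
               "e1 \<bullet> e2 = 0" "e1 \<bullet> e3 = 0" "e2 \<bullet> e3 = 0"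
    and ax1: "bpsk c1 - bpsk zero_word = norm (bpsk c1 - bpsk zero_word) *\<^sub>R e1"
    and ax2: "bpsk c2 - bpsk zero_word =
               ((bpsk c2 - bpsk zero_word) \<bullet> e1) *\<^sub>R e1 + ((bpsk c2 - bpsk zero_word) \<bullet> e2) *\<^sub>R e2"
             "(bpsk c2 - bpsk zero_word) \<bullet> e2 > 0"
    and ax3: "bpsk c - bpsk zero_word =
               ((bpsk c - bpsk zero_word) \<bullet> e1) *\<^sub>R e1 + ((bpsk c - bpsk zero_word) \<bullet> e2) *\<^sub>R e2
               + ((bpsk c - bpsk zero_word) \<bullet> e3) *\<^sub>R e3"
             "(bpsk c - bpsk zero_word) \<bullet> e3 \<ge> 0"
    and theta: "0 < \<theta>" "\<theta> < pi"
      "bpsk c2 - bpsk zero_word = norm (bpsk c2 - bpsk zero_word) *\<^sub>R (cos \<theta> *\<^sub>R e1 + sin \<theta> *\<^sub>R e2)"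
    and angles: "0 \<le> \<phi>" "\<phi> \<le> pi / 2"
      "bpsk c - bpsk zero_word = norm (bpsk c - bpsk zero_word) *\<^sub>R
          ((sin \<phi> * cos \<alpha>) *\<^sub>R e1 + (sin \<phi> * sin \<alpha>) *\<^sub>R e2 + cos \<phi> *\<^sub>R e3)"
    and sigma: "\<sigma> > 0"
  shows "measure (awgn_output (bpsk zero_word) \<sigma>)
           (pairwise_error (bpsk zero_word) (bpsk c1) \<union> pairwise_error (bpsk zero_word) (bpsk c2)
            \<union> pairwise_error (bpsk zero_word) (bpsk c))
         = 1 - set_lebesgue_integral lborel
             {(\<xi>1::real, \<xi>2::real, \<xi>3::real).
                \<xi>1 < sqrt (real (hamming_weight c1)) \<and>
                \<xi>1 * cos \<theta> + \<xi>2 * sin \<theta> < sqrt (real (hamming_weight c2)) \<and>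
                \<xi>1 * sin \<phi> * cos \<alpha> + \<xi>2 * sin \<phi> * sin \<alpha> + \<xi>3 * cos \<phi> < sqrt (real (hamming_weight c))}
             (\<lambda>(\<xi>1, \<xi>2, \<xi>3). normal_density 0 \<sigma> \<xi>1 * normal_density 0 \<sigma> \<xi>2 * normal_density 0 \<sigma> \<xi>3)"
proof -
  let ?s0 = "bpsk zero_word :: real^'n"
  define \<Omega> where "\<Omega> = {(\<xi>1::real, \<xi>2::real, \<xi>3::real).
                \<xi>1 < sqrt (real (hamming_weight c1)) \<and>
                \<xi>1 * cos \<theta> + \<xi>2 * sin \<theta> < sqrt (real (hamming_weight c2)) \<and>
                \<xi>1 * sin \<phi> * cos \<alpha> + \<xi>2 * sin \<phi> * sin \<alpha> + \<xi>3 * cos \<phi> < sqrt (real (hamming_weight c))}"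
  let ?F = "{y. ((y - ?s0) \<bullet> e1, (y - ?s0) \<bullet> e2, (y - ?s0) \<bullet> e3) \<in> \<Omega>}"
  have nonzero: "c1 \<noteq> zero_word" "c2 \<noteq> zero_word" "c \<noteq> zero_word"
    using distinct by auto
  have error: "pairwise_error ?s0 (bpsk c1) \<union> pairwise_error ?s0 (bpsk c2) \<union> pairwise_error ?s0 (bpsk c)
      = UNIV - ?F"
    by (auto simp: \<Omega>_def not_le inner_add_right inner_scaleR_right mult_ac
        pairwise_error_zero_word_iff[OF nonzero(1) ax1] pairwise_error_zero_word_iff[OF nonzero(2) theta(3)]
        pairwise_error_zero_word_iff[OF nonzero(3) angles(3)])
  have "open \<Omega>"
    unfolding \<Omega>_def case_prod_beta by (intro open_Collect_conj open_Collect_less continuous_intros)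
  then have \<Omega> [measurable]: "\<Omega> \<in> sets borel"
    by (rule borel_open)
  interpret prob_space "awgn_output ?s0 \<sigma>"
    by (rule prob_space_awgn_output[OF sigma])
  have "?F \<in> events"
    unfolding sets_awgn_output by measurable
  then have "prob (UNIV - ?F) = 1 - prob ?F"
    using prob_compl by simp
  also have "prob ?F = set_lebesgue_integral lborel \<Omega>
      (\<lambda>(\<xi>1, \<xi>2, \<xi>3). normal_density 0 \<sigma> \<xi>1 * normal_density 0 \<sigma> \<xi>2 * normal_density 0 \<sigma> \<xi>3)"
    by (rule measure_awgn_output_orthonormal_coordinates[OF sigma ortho \<Omega>])
  finally show ?thesis
    unfolding error \<Omega>_def .
qed

end
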